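(* For each integer $n>2$, there is a finite group $Q_n$ with the following properties: (1) $Q_n$ is generated by two elements $A,B$; (2) $Q_n$ is metabelian; (3) $Q_n$ is $n$-periodic, i.e. $g^n=1$ for all $g\in Q_n$; (4) the generator $A$ and the commutator $[A,B]$ both have order exactly $n$. *)

theory Defs
  imports "HOL-Algebra.Algebra"
begin

definition commutator :: "('a, 'b) monoid_scheme \<Rightarrow> 'a \<Rightarrow> 'a \<Rightarrow> 'a" where
  "commutator G a b = inv\<^bsub>G\<^esub> a \<otimes>\<^bsub>G\<^esub> inv\<^bsub>G\<^esub> b \<otimes>\<^bsub>G\<^esub> a \<otimes>\<^bsub>G\<^esub> b"

definition metabelian :: "('a, 'b) monoid_scheme \<Rightarrow> bool" where
  "metabelian G \<longleftrightarrow> (\<forall>x \<in> derived G (carrier G). \<forall>y \<in> derived G (carrier G).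
       x \<otimes>\<^bsub>G\<^esub> y = y \<otimes>\<^bsub>G\<^esub> x)"

end

theory Submission
  imports Defs "HOL-Number_Theory.Cong"
begin

text \<open>
Choose L with L dvd n and L > 2, and let G be the semidirect product of Z/n and (Z/n)^L in which
s acts by cyclically shifting the L coordinates by s mod L, i.e. (s, f) (t, g) = (s + t, f + g(. + s)).
The witness is the subgroup generated by A = (1, 0) and B = (0, e_0 - e_2).
The commutator subgroup of G lies in the abelian base (Z/n)^L, so all subgroups of G are metabelian,
and [A, B] is a base element with a coordinate -1, hence of order n like A.
The n-th power of (s, f) has the coordinates sum_{j<n} f(i + j s), so the elements (s, f) whose sums
of f along all progressions of length n vanish mod n form a subgroup of exponent n.
B belongs to it as soon as L divides every sum of e_0 - e_2 along a progression of length L in Z/L;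
this holds for L = 4 and for L an odd prime (a progression with step prime to L runs through Z/L),
and one of these divides n.
Finally the finite witness is transported to a group on nat along an injection.
\<close>

section \<open>Transport of group properties along homomorphisms\<close>

definition image_monoid :: "('a, 'c) monoid_scheme \<Rightarrow> ('a \<Rightarrow> 'b) \<Rightarrow> 'b monoid" where
  "image_monoid G h = \<lparr>carrier = h ` carrier G,
     monoid.mult = (\<lambda>x y. h (inv_into (carrier G) h x \<otimes>\<^bsub>G\<^esub> inv_into (carrier G) h y)),
     one = h \<one>\<^bsub>G\<^esub>\<rparr>"

lemma image_monoid_mult:
  assumes "inj_on h (carrier G)" "a \<in> carrier G" "b \<in> carrier G"
  shows "h a \<otimes>\<^bsub>image_monoid G h\<^esub> h b = h (a \<otimes>\<^bsub>G\<^esub> b)"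
  using assms by (simp add: image_monoid_def)

lemma group_image_monoid:
  assumes "group G" and inj: "inj_on h (carrier G)"
  shows "group (image_monoid G h)"
proof -
  interpret G: group G by fact
  have carrier: "carrier (image_monoid G h) = h ` carrier G" and one: "\<one>\<^bsub>image_monoid G h\<^esub> = h \<one>\<^bsub>G\<^esub>"
    by (simp_all add: image_monoid_def)
  note mult = image_monoid_mult[OF inj]
  show ?thesis
  proof (rule groupI)
    fix x assume "x \<in> carrier (image_monoid G h)"
    then obtain a where a: "a \<in> carrier G" "x = h a" by (auto simp: carrier)
    then have "h (inv\<^bsub>G\<^esub> a) \<otimes>\<^bsub>image_monoid G h\<^esub> x = \<one>\<^bsub>image_monoid G h\<^esub>"
      by (simp add: mult one)
    then show "\<exists>y\<in>carrier (image_monoid G h). y \<otimes>\<^bsub>image_monoid G h\<^esub> x = \<one>\<^bsub>image_monoid G h\<^esub>"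
      using a by (auto simp: carrier)
  qed (auto simp: carrier one mult G.m_assoc)
qed

lemma iso_image_monoid:
  assumes "inj_on h (carrier G)"
  shows "h \<in> iso G (image_monoid G h)"
  using assms image_monoid_mult[OF assms] unfolding iso_def hom_def bij_betw_def
  by (auto simp: image_monoid_def)

lemma countable_group_iso_nat_monoid:
  assumes "group G" "countable (carrier G)"
  obtains Q :: "nat monoid" and h where "group Q" "h \<in> iso G Q"
  using group_image_monoid[OF assms(1)] iso_image_monoid inj_on_to_nat_on[OF assms(2)] by blast

lemma (in group) group_hom_subgroup_inclusion:
  assumes "subgroup H G"
  shows "group_hom (G\<lparr>carrier := H\<rparr>) G id"
  using assms subgroup_imp_group[OF assms] is_group
  by (auto simp: group_hom_def group_hom_axioms_def hom_def subgroup.mem_carrier)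

lemma (in group_hom) hom_commutator:
  assumes "a \<in> carrier G" "b \<in> carrier G"
  shows "h (commutator G a b) = commutator H (h a) (h b)"
  using assms by (simp add: commutator_def)

lemma (in group_hom) ord_hom_inj:
  assumes inj: "inj_on h (carrier G)" and x: "x \<in> carrier G"
  shows "group.ord H (h x) = group.ord G x"
proof -
  have "h x [^]\<^bsub>H\<^esub> k = \<one>\<^bsub>H\<^esub> \<longleftrightarrow> group.ord G x dvd k" for k
  proof -
    have "h x [^]\<^bsub>H\<^esub> k = \<one>\<^bsub>H\<^esub> \<longleftrightarrow> h (x [^]\<^bsub>G\<^esub> k) = h \<one>\<^bsub>G\<^esub>"
      using x by (simp add: hom_nat_pow)
    also have "\<dots> \<longleftrightarrow> x [^]\<^bsub>G\<^esub> k = \<one>\<^bsub>G\<^esub>"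
      using x by (simp add: inj_on_eq_iff[OF inj] del: hom_one)
    also have "\<dots> \<longleftrightarrow> group.ord G x dvd k"
      using G.pow_eq_id[OF x] .
    finally show ?thesis .
  qed
  then show ?thesis
    using H.ord_unique x by simp
qed

lemma (in group_hom) metabelian_hom_inj:
  assumes inj: "inj_on h (carrier G)" and "metabelian H"
  shows "metabelian G"
  unfolding metabelian_def
proof (intro ballI)
  fix x y assume x: "x \<in> derived G (carrier G)" and y: "y \<in> derived G (carrier G)"
  have "h ` derived G (carrier G) \<subseteq> derived H (carrier H)"
    using derived_img[of "carrier G"] H.mono_derived[of "h ` carrier G" "carrier H"]
    by (auto simp: image_subset_iff)
  then have "h x \<otimes>\<^bsub>H\<^esub> h y = h y \<otimes>\<^bsub>H\<^esub> h x"
    using x y \<open>metabelian H\<close> unfolding metabelian_def by blast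
  moreover have "x \<in> carrier G" "y \<in> carrier G"
    using x y G.derived_in_carrier[of "carrier G"] by auto
  ultimately show "x \<otimes>\<^bsub>G\<^esub> y = y \<otimes>\<^bsub>G\<^esub> x"
    by (metis hom_mult G.m_closed inj_onD[OF inj])
qed

lemma iso_metabelian:
  assumes "group G" "group H" "h \<in> iso G H" "metabelian G"
  shows "metabelian H"
proof -
  have "inv_into (carrier G) h \<in> iso H G"
    using group.iso_set_sym[OF assms(1,3)] .
  then show ?thesis
    using group_hom.metabelian_hom_inj[of H G "inv_into (carrier G) h"] assms
    by (simp add: group_hom_def group_hom_axioms_def iso_def bij_betw_def)
qed

lemma (in group_hom) surj_hom_pow_eq_one:
  fixes k :: nat
  assumes "h ` carrier G = carrier H" and "\<forall>x\<in>carrier G. x [^]\<^bsub>G\<^esub> k = \<one>\<^bsub>G\<^esub>"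
  shows "\<forall>y\<in>carrier H. y [^]\<^bsub>H\<^esub> k = \<one>\<^bsub>H\<^esub>"
proof
  fix y assume "y \<in> carrier H"
  then obtain x where x: "x \<in> carrier G" "y = h x"
    using assms(1) by blast
  then have "x [^]\<^bsub>G\<^esub> k = \<one>\<^bsub>G\<^esub>"
    using assms(2) by blast
  moreover have "h (x [^]\<^bsub>G\<^esub> k) = h x [^]\<^bsub>H\<^esub> k"
    by (rule hom_nat_pow[OF x(1)])
  ultimately show "y [^]\<^bsub>H\<^esub> k = \<one>\<^bsub>H\<^esub>"
    using x by simp
qed

section \<open>Functions balanced along arithmetic progressions\<close>

definition progression_balanced :: "nat \<Rightarrow> nat \<Rightarrow> (nat \<Rightarrow> int) \<Rightarrow> bool" where
  "progression_balanced m L f \<longleftrightarrow> (\<forall>s i. int m dvd (\<Sum>j<m. f ((i + j * s) mod L)))"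

lemma progression_balanced_add:
  "progression_balanced m L f \<Longrightarrow> progression_balanced m L g \<Longrightarrow>
     progression_balanced m L (\<lambda>i. f i + g i)"
  by (simp add: progression_balanced_def sum.distrib)

lemma progression_balanced_uminus:
  "progression_balanced m L f \<Longrightarrow> progression_balanced m L (\<lambda>i. - f i)"
  by (simp add: progression_balanced_def sum_negf)

lemma progression_balanced_mod:
  "progression_balanced m L f \<Longrightarrow> progression_balanced m L (\<lambda>i. f i mod int m)"
  by (simp add: progression_balanced_def dvd_eq_mod_eq_0 mod_sum_eq)

lemma progression_balanced_shift:
  assumes "progression_balanced m L f"
  shows "progression_balanced m L (\<lambda>i. f ((i + t) mod L))"
proof -
  have "((i + j * s) mod L + t) mod L = (i + t + j * s) mod L" for i j s
    by (simp add: mod_simps ac_simps)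
  then show ?thesis
    using assms by (simp add: progression_balanced_def)
qed

lemma progression_balanced_restrict:
  "0 < L \<Longrightarrow> progression_balanced m L (restrict f {..<L}) \<longleftrightarrow> progression_balanced m L f"
  by (simp add: progression_balanced_def)

lemma sum_lessThan_mult_periodic:
  fixes F :: "nat \<Rightarrow> int"
  shows "(\<Sum>j<k * L. F (j mod L)) = int k * (\<Sum>j<L. F j)"
proof (induction k)
  case (Suc k)
  have "(\<Sum>j\<in>{k * L..<L + k * L}. F (j mod L)) = (\<Sum>j<L. F ((j + k * L) mod L))"
    using sum.shift_bounds_nat_ivl[of "\<lambda>j. F (j mod L)" 0 "k * L" L] by (simp add: lessThan_atLeast0)
  also have "\<dots> = (\<Sum>j<L. F j)"
    by simp
  finally show ?case
    using Suc sum.atLeastLessThan_concat[of 0 "k * L" "L + k * L" "\<lambda>j. F (j mod L)"]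
    by (simp add: lessThan_atLeast0 algebra_simps)
qed simp

lemma progression_balanced_multiple:
  assumes "L dvd n" and "progression_balanced L L f"
  shows "progression_balanced n L f"
  unfolding progression_balanced_def
proof (intro allI)
  fix s i
  obtain k where n: "n = k * L"
    using assms(1) by (metis dvd_def mult.commute)
  obtain c where c: "(\<Sum>j<L. f ((i + j * s) mod L)) = int L * c"
    using assms(2) unfolding progression_balanced_def by (meson dvdE)
  have "(\<Sum>j<n. f ((i + j * s) mod L)) = (\<Sum>j<k * L. f ((i + (j mod L) * s) mod L))"
    unfolding n by (intro sum.cong refl arg_cong[where f = f]) (metis mod_add_right_eq mod_mult_left_eq)
  also have "\<dots> = int k * (int L * c)"
    using sum_lessThan_mult_periodic[where F = "\<lambda>j. f ((i + j * s) mod L)" and k = k and L = L] c by simp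
  finally show "int n dvd (\<Sum>j<n. f ((i + j * s) mod L))"
    by (simp add: n)
qed

definition delta02 :: "nat \<Rightarrow> int" where
  "delta02 k = (if k = 0 then 1 else if k = 2 then -1 else 0)"

lemma progression_balanced_delta02_4: "progression_balanced 4 4 delta02"
  unfolding progression_balanced_def
proof (intro allI)
  fix s i :: nat
  have "(i + j * s) mod 4 = (i mod 4 + j * (s mod 4)) mod 4" for j
    by (metis mod_add_left_eq mod_add_right_eq mod_mult_right_eq)
  moreover have "int 4 dvd (\<Sum>j<4. delta02 ((a + j * b) mod 4))" if "a < 4" "b < 4" for a b :: nat
  proof -
    have "a \<in> {0, 1, 2, 3}" "b \<in> {0, 1, 2, 3}"
      using that by auto
    moreover have "{..<4::nat} = {0, 1, 2, 3}"
      by auto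
    ultimately show ?thesis
      by (elim insertE emptyE) (simp_all add: delta02_def)
  qed
  ultimately show "int 4 dvd (\<Sum>j<4. delta02 ((i + j * s) mod 4))"
    by simp
qed

lemma progression_balanced_delta02_prime:
  assumes p: "Factorial_Ring.prime p" "2 < p"
  shows "progression_balanced p p delta02"
  unfolding progression_balanced_def
proof (intro allI)
  fix s i :: nat
  show "int p dvd (\<Sum>j<p. delta02 ((i + j * s) mod p))"
  proof (cases "p dvd s")
    case True
    have "(i + j * s) mod p = i mod p" for j
      using True by (metis add.right_neutral dvd_imp_mod_0 dvd_mult mod_add_right_eq)
    then show ?thesis
      by simp
  next
    case False
    then have "coprime s p"
      using p(1) by (simp add: prime_imp_coprime_nat coprime_commute)
    then have "inj_on (\<lambda>j. (i + j * s) mod p) {..<p}"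
      by (auto intro!: inj_onI cong_less_modulus_unique_nat
               simp: cong_def[symmetric] cong_add_lcancel_nat cong_mult_rcancel_nat)
    moreover have "(\<lambda>j. (i + j * s) mod p) ` {..<p} \<subseteq> {..<p}"
      using p by auto
    ultimately have "(\<lambda>j. (i + j * s) mod p) ` {..<p} = {..<p}"
      by (simp add: endo_inj_surj)
    then have "(\<Sum>j<p. delta02 ((i + j * s) mod p)) = (\<Sum>k<p. delta02 k)"
      using sum.reindex[of "\<lambda>j. (i + j * s) mod p" "{..<p}" delta02] \<open>inj_on _ _\<close> by simp
    also have "\<dots> = 0"
      using p by (simp add: delta02_def sum.If_cases)
    finally show ?thesis
      by simp
  qed
qed

lemma exists_balanced_divisor:
  assumes "2 < n"
  obtains L where "L dvd n" "2 < L" "progression_balanced L L delta02"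
proof (cases "4 dvd n")
  case True
  then show ?thesis
    using that progression_balanced_delta02_4 by auto
next
  case False
  obtain m where m: "m dvd n" "odd m" "m \<noteq> 1"
  proof (cases "even n")
    case True
    then obtain k where "n = 2 * k" ..
    then show ?thesis
      using that[of k] False assms by auto
  qed (use that[of n] assms in auto)
  then obtain p where p: "Factorial_Ring.prime p" "p dvd m"
    using prime_factor_nat by blast
  then have "2 < p"
    using m(2) prime_ge_2_nat[of p] by (metis dvd_trans even_numeral le_neq_implies_less)
  then show ?thesis
    using that p progression_balanced_delta02_prime dvd_trans[OF p(2) m(1)] by blast
qed

section \<open>The shift group\<close>

definition shift_group :: "nat \<Rightarrow> nat \<Rightarrow> (nat \<times> (nat \<Rightarrow> int)) monoid" where
  "shift_group n L = \<lparr>carrier = {..<n} \<times> ({..<L} \<rightarrow>\<^sub>E {0..<int n}),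
     monoid.mult = (\<lambda>x y. ((fst x + fst y) mod n,
                          \<lambda>i\<in>{..<L}. (snd x i + snd y ((i + fst x) mod L)) mod int n)),
     one = (0, \<lambda>i\<in>{..<L}. 0)\<rparr>"

lemma carrier_shift_group:
  "x \<in> carrier (shift_group n L) \<longleftrightarrow> fst x < n \<and> snd x \<in> {..<L} \<rightarrow>\<^sub>E {0..<int n}"
  by (cases x) (simp add: shift_group_def)

lemma mult_shift_group:
  "x \<otimes>\<^bsub>shift_group n L\<^esub> y =
     ((fst x + fst y) mod n, \<lambda>i\<in>{..<L}. (snd x i + snd y ((i + fst x) mod L)) mod int n)"
  by (simp add: shift_group_def)

lemma one_shift_group: "\<one>\<^bsub>shift_group n L\<^esub> = (0, \<lambda>i\<in>{..<L}. 0)"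
  by (simp add: shift_group_def)

locale shift_group_setting =
  fixes n L :: nat
  assumes n_pos: "0 < n" and L_dvd_n: "L dvd n"
begin

abbreviation G :: "(nat \<times> (nat \<Rightarrow> int)) monoid" where
  "G \<equiv> shift_group n L"

lemma L_pos: "0 < L"
  using n_pos L_dvd_n by (auto intro: Nat.gr0I)

lemma mod_n_mod_L: "x mod n mod L = x mod L"
  using L_dvd_n by (simp add: mod_mod_cancel)

lemma restrict_mod_in_PiE: "(\<lambda>i\<in>{..<L}. F i mod int n) \<in> {..<L} \<rightarrow>\<^sub>E {0..<int n}"
  using n_pos by (auto simp: PiE_iff)

definition shift_inv :: "nat \<times> (nat \<Rightarrow> int) \<Rightarrow> nat \<times> (nat \<Rightarrow> int)" where
  "shift_inv x = ((n - fst x) mod n, \<lambda>i\<in>{..<L}. (- snd x ((i + (n - fst x) mod n) mod L)) mod int n)"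

lemma shift_inv_carrier: "shift_inv x \<in> carrier G"
  using n_pos by (simp add: shift_inv_def carrier_shift_group restrict_mod_in_PiE)

lemma shift_inv_mult: "x \<in> carrier G \<Longrightarrow> shift_inv x \<otimes>\<^bsub>G\<^esub> x = \<one>\<^bsub>G\<^esub>"
  using n_pos
  by (auto simp: mod_n_mod_L shift_inv_def mult_shift_group one_shift_group carrier_shift_group fun_eq_iff
      mod_simps mod_mod_cancel)

lemma group_shift_group: "group G"
proof (rule groupI)
  fix x y z assume "x \<in> carrier G" "y \<in> carrier G" "z \<in> carrier G"
  have "(i + (fst x + fst y) mod n) mod L = ((i + fst x) mod L + fst y) mod L" for i
    by (metis add.assoc mod_add_left_eq mod_add_right_eq mod_n_mod_L)
  then show "x \<otimes>\<^bsub>G\<^esub> y \<otimes>\<^bsub>G\<^esub> z = x \<otimes>\<^bsub>G\<^esub> (y \<otimes>\<^bsub>G\<^esub> z)"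
    using L_pos by (auto simp: mult_shift_group fun_eq_iff mod_simps ac_simps)
next
  fix x assume "x \<in> carrier G"
  then show "\<one>\<^bsub>G\<^esub> \<otimes>\<^bsub>G\<^esub> x = x"
    by (cases x) (auto simp: mult_shift_group one_shift_group carrier_shift_group fun_eq_iff PiE_iff
        intro: extensional_arb[symmetric])
next
  fix x assume "x \<in> carrier G"
  then show "\<exists>y\<in>carrier G. y \<otimes>\<^bsub>G\<^esub> x = \<one>\<^bsub>G\<^esub>"
    using shift_inv_carrier shift_inv_mult by blast
qed (use n_pos in \<open>auto simp: carrier_shift_group mult_shift_group one_shift_group
      restrict_mod_in_PiE PiE_iff\<close>)

lemma inv_shift_group: "x \<in> carrier G \<Longrightarrow> inv\<^bsub>G\<^esub> x = shift_inv x"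
  using group.inv_equality[OF group_shift_group shift_inv_mult] shift_inv_carrier by blast

lemma pow_shift_group:
  "x [^]\<^bsub>G\<^esub> k = ((k * fst x) mod n,
     \<lambda>i\<in>{..<L}. (\<Sum>j<k. snd x ((i + j * fst x) mod L)) mod int n)"
proof (induction k)
  case (Suc k)
  have "(i + k * fst x mod n) mod L = (i + k * fst x) mod L" for i
    by (metis mod_add_right_eq mod_n_mod_L)
  with Suc show ?case
    by (auto simp: mult_shift_group fun_eq_iff mod_simps add.commute)
qed (simp add: one_shift_group fun_eq_iff)

definition balanced_part :: "(nat \<times> (nat \<Rightarrow> int)) set" where
  "balanced_part = {x \<in> carrier G. progression_balanced n L (snd x)}"

lemma subgroup_balanced_part: "subgroup balanced_part G"
proof (rule group.subgroupI[OF group_shift_group])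
  have "\<one>\<^bsub>G\<^esub> \<in> balanced_part"
    using n_pos L_pos
    by (auto simp: balanced_part_def one_shift_group carrier_shift_group progression_balanced_def)
  then show "balanced_part \<noteq> {}"
    by blast
  show "balanced_part \<subseteq> carrier G"
    by (auto simp: balanced_part_def)
next
  fix x assume x: "x \<in> balanced_part"
  then have "progression_balanced n L (\<lambda>i. - snd x ((i + (n - fst x) mod n) mod L) mod int n)"
    by (intro progression_balanced_mod progression_balanced_uminus progression_balanced_shift)
      (simp add: balanced_part_def)
  then show "inv\<^bsub>G\<^esub> x \<in> balanced_part"
    using x L_pos shift_inv_carrier
    by (simp add: balanced_part_def inv_shift_group shift_inv_def progression_balanced_restrict)
next
  fix x y assume x: "x \<in> balanced_part" and y: "y \<in> balanced_part"
  then have "progression_balanced n L (\<lambda>i. (snd x i + snd y ((i + fst x) mod L)) mod int n)"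
    by (intro progression_balanced_mod progression_balanced_add progression_balanced_shift)
      (simp_all add: balanced_part_def)
  then show "x \<otimes>\<^bsub>G\<^esub> y \<in> balanced_part"
    using x y L_pos monoid.m_closed[OF group.is_monoid[OF group_shift_group]]
    by (simp add: balanced_part_def mult_shift_group progression_balanced_restrict)
qed

lemma pow_n_balanced_part:
  assumes "x \<in> balanced_part"
  shows "x [^]\<^bsub>G\<^esub> n = \<one>\<^bsub>G\<^esub>"
proof -
  have "(\<Sum>j<n. snd x ((i + j * fst x) mod L)) mod int n = 0" for i
    using assms by (simp add: balanced_part_def progression_balanced_def)
  then show ?thesis
    by (simp add: pow_shift_group one_shift_group)
qed

lemma fst_hom: "(\<lambda>x. int (fst x)) \<in> hom G (integer_mod_group n)"
proof (rule homI)
  fix x assume "x \<in> carrier G"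
  then show "int (fst x) \<in> carrier (integer_mod_group n)"
    using n_pos by (simp add: carrier_shift_group carrier_integer_mod_group)
qed (simp add: mult_shift_group zmod_int)

lemma fst_derived:
  assumes "x \<in> derived G (carrier G)"
  shows "fst x = 0"
proof -
  interpret fst: group_hom G "integer_mod_group n" "\<lambda>x. int (fst x)"
    using group_shift_group fst_hom by (simp add: group_hom_def group_hom_axioms_def)
  have "(\<lambda>x. int (fst x)) ` carrier G \<subseteq> carrier (integer_mod_group n)"
    by (blast intro: fst.hom_closed)
  then have "(\<lambda>x. int (fst x)) ` derived G (carrier G) = {0}"
    using fst.derived_img[of "carrier G"] comm_group.derived_eq_singleton[OF abelian_integer_mod_group]
    by simp
  then show ?thesis
    using imageI[OF assms, of "\<lambda>x. int (fst x)"] by simp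
qed

lemma metabelian_shift_group: "metabelian G"
  unfolding metabelian_def
proof (intro ballI)
  fix x y assume "x \<in> derived G (carrier G)" "y \<in> derived G (carrier G)"
  then show "x \<otimes>\<^bsub>G\<^esub> y = y \<otimes>\<^bsub>G\<^esub> x"
    using fst_derived L_pos by (auto simp: mult_shift_group fun_eq_iff ac_simps)
qed

lemma ord_base_element:
  assumes x: "x \<in> carrier G" and "fst x = 0" and "i < L" and "snd x i = (-1) mod int n"
  shows "group.ord G x = n"
proof -
  have pow: "x [^]\<^bsub>G\<^esub> k = (0, \<lambda>i\<in>{..<L}. (int k * snd x i) mod int n)" for k
    using \<open>fst x = 0\<close> by (simp add: pow_shift_group fun_eq_iff)
  have "x [^]\<^bsub>G\<^esub> k = \<one>\<^bsub>G\<^esub> \<longleftrightarrow> n dvd k" for k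
  proof
    assume "x [^]\<^bsub>G\<^esub> k = \<one>\<^bsub>G\<^esub>"
    then have "(int k * ((-1) mod int n)) mod int n = 0"
      using \<open>i < L\<close> \<open>snd x i = _\<close> by (simp add: pow one_shift_group fun_eq_iff) (metis lessThan_iff)
    then have "(- int k) mod int n = 0"
      by (simp add: mod_mult_right_eq)
    then show "n dvd k"
      by (simp add: mod_eq_0_iff_dvd)
  qed (auto simp: pow one_shift_group fun_eq_iff)
  then show ?thesis
    using group.ord_unique[OF group_shift_group x] by blast
qed

end

section \<open>The two-generated witness\<close>

locale shift_witness = shift_group_setting +
  assumes L_gt_2: "2 < L" and delta02_balanced: "progression_balanced L L delta02"
begin

definition gen_shift :: "nat \<times> (nat \<Rightarrow> int)" where
  "gen_shift = (1, \<lambda>i\<in>{..<L}. 0)"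

definition gen_delta :: "nat \<times> (nat \<Rightarrow> int)" where
  "gen_delta = (0, \<lambda>i\<in>{..<L}. delta02 i mod int n)"

abbreviation W :: "(nat \<times> (nat \<Rightarrow> int)) monoid" where
  "W \<equiv> G\<lparr>carrier := generate G {gen_shift, gen_delta}\<rparr>"

lemma n_gt_2: "2 < n"
  using dvd_imp_le[OF L_dvd_n n_pos] L_gt_2 by linarith

lemma gens_carrier: "gen_shift \<in> carrier G" "gen_delta \<in> carrier G"
  using n_gt_2 by (auto simp: gen_shift_def gen_delta_def carrier_shift_group restrict_mod_in_PiE PiE_iff)

lemma gens_balanced: "{gen_shift, gen_delta} \<subseteq> balanced_part"
proof -
  have "progression_balanced n L (\<lambda>i. delta02 i mod int n)"
    using progression_balanced_multiple[OF L_dvd_n delta02_balanced] by (rule progression_balanced_mod)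
  then show ?thesis
    using n_gt_2 L_pos
    by (auto simp: balanced_part_def gen_shift_def gen_delta_def carrier_shift_group
        restrict_mod_in_PiE PiE_iff progression_balanced_restrict progression_balanced_def)
qed

lemma generate_subset_balanced_part: "generate G {gen_shift, gen_delta} \<subseteq> balanced_part"
  using group.generate_subgroup_incl[OF group_shift_group gens_balanced subgroup_balanced_part] .

lemma subgroup_generate_gens: "subgroup (generate G {gen_shift, gen_delta}) G"
  using group.generate_is_subgroup[OF group_shift_group] gens_carrier by simp

lemma group_hom_W: "group_hom W G id"
  using group.group_hom_subgroup_inclusion[OF group_shift_group subgroup_generate_gens] .

lemma gens_in_W: "gen_shift \<in> carrier W" "gen_delta \<in> carrier W"
  by (auto intro: generate.incl)

lemma ord_gen_shift: "group.ord G gen_shift = n"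
proof -
  have "gen_shift [^]\<^bsub>G\<^esub> k = \<one>\<^bsub>G\<^esub> \<longleftrightarrow> n dvd k" for k
    by (auto simp: pow_shift_group gen_shift_def one_shift_group fun_eq_iff mod_eq_0_iff_dvd)
  then show ?thesis
    using group.ord_unique[OF group_shift_group gens_carrier(1)] by blast
qed

lemma commutator_gens:
  "commutator G gen_shift gen_delta =
     (0, \<lambda>i\<in>{..<L}. (delta02 i - delta02 ((i + (n - 1)) mod L)) mod int n)"
proof -
  have inv_shift: "inv\<^bsub>G\<^esub> gen_shift = (n - 1, \<lambda>i\<in>{..<L}. 0)"
    using n_gt_2 L_pos unfolding inv_shift_group[OF gens_carrier(1)] by (simp add: shift_inv_def gen_shift_def)
  have inv_delta: "inv\<^bsub>G\<^esub> gen_delta = (0, \<lambda>i\<in>{..<L}. (- delta02 i) mod int n)"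
    unfolding inv_shift_group[OF gens_carrier(2)] by (auto simp: shift_inv_def gen_delta_def fun_eq_iff mod_simps)
  let ?f = "\<lambda>i. (- delta02 ((i + (n - 1)) mod L)) mod int n"
  have "inv\<^bsub>G\<^esub> gen_shift \<otimes>\<^bsub>G\<^esub> inv\<^bsub>G\<^esub> gen_delta = (n - 1, restrict ?f {..<L})"
    using n_gt_2 L_pos by (auto simp: inv_shift inv_delta mult_shift_group fun_eq_iff)
  moreover have "(n - 1, restrict ?f {..<L}) \<otimes>\<^bsub>G\<^esub> gen_shift = (0, restrict ?f {..<L})"
    using n_gt_2 by (auto simp: mult_shift_group gen_shift_def fun_eq_iff)
  moreover have "(0, restrict ?f {..<L}) \<otimes>\<^bsub>G\<^esub> gen_delta =
      (0, \<lambda>i\<in>{..<L}. (delta02 i - delta02 ((i + (n - 1)) mod L)) mod int n)"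
    by (auto simp: mult_shift_group gen_delta_def fun_eq_iff mod_simps)
  ultimately show ?thesis
    by (simp add: commutator_def)
qed

lemma ord_commutator_gens: "group.ord G (commutator G gen_shift gen_delta) = n"
proof (rule ord_base_element)
  show "commutator G gen_shift gen_delta \<in> carrier G"
    using gens_carrier group.inv_closed[OF group_shift_group]
      monoid.m_closed[OF group.is_monoid[OF group_shift_group]]
    by (simp add: commutator_def)
  have "(1 + (n - 1)) mod L = 0"
    using n_gt_2 L_dvd_n by simp
  then show "snd (commutator G gen_shift gen_delta) 1 = (- 1) mod int n"
    using L_gt_2 by (simp add: commutator_gens delta02_def)
qed (use commutator_gens L_gt_2 in auto)

lemma group_W: "group W"
  using group.subgroup_imp_group[OF group_shift_group subgroup_generate_gens] .

lemma finite_W: "finite (carrier W)"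
proof -
  have "finite (carrier G)"
    by (simp add: shift_group_def finite_PiE)
  then show ?thesis
    using subgroup.subset[OF subgroup_generate_gens] by (simp add: finite_subset)
qed

lemma generate_W: "generate W {gen_shift, gen_delta} = carrier W"
  using group.generate_consistent[OF group_shift_group _ subgroup_generate_gens] gens_in_W by simp

lemma metabelian_W: "metabelian W"
  using group_hom.metabelian_hom_inj[OF group_hom_W] metabelian_shift_group by simp

lemma pow_n_W:
  assumes "g \<in> carrier W"
  shows "g [^]\<^bsub>W\<^esub> n = \<one>\<^bsub>W\<^esub>"
proof -
  have "g \<in> balanced_part"
    using assms generate_subset_balanced_part by auto
  then show ?thesis
    using pow_n_balanced_part monoid.nat_pow_consistent[OF group.is_monoid[OF group_shift_group]]
    by simp
qed

lemma ord_W_gen_shift: "group.ord W gen_shift = n"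
  using group_hom.ord_hom_inj[OF group_hom_W _ gens_in_W(1)] ord_gen_shift by simp

lemma commutator_gens_in_W: "commutator W gen_shift gen_delta \<in> carrier W"
  using gens_in_W group.inv_closed[OF group_W] monoid.m_closed[OF group.is_monoid[OF group_W]]
  by (simp add: commutator_def)

lemma ord_W_commutator_gens: "group.ord W (commutator W gen_shift gen_delta) = n"
  using group_hom.ord_hom_inj[OF group_hom_W _ commutator_gens_in_W]
    group_hom.hom_commutator[OF group_hom_W gens_in_W] ord_commutator_gens by simp

end

theorem proposition2p1:
  fixes n :: nat
  assumes "n > 2"
  shows "\<exists>(Q :: nat monoid) A B.
           group Q \<and> finite (carrier Q) \<and>
           A \<in> carrier Q \<and> B \<in> carrier Q \<and>
           generate Q {A, B} = carrier Q \<and>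
           metabelian Q \<and>
           (\<forall>g \<in> carrier Q. g [^]\<^bsub>Q\<^esub> n = \<one>\<^bsub>Q\<^esub>) \<and>
           group.ord Q A = n \<and>
           group.ord Q (commutator Q A B) = n"
proof -
  obtain L where "L dvd n" "2 < L" "progression_balanced L L delta02"
    using exists_balanced_divisor[OF assms] .
  then interpret shift_witness n L
    using assms by unfold_locales auto
  obtain Q :: "nat monoid" and h where "group Q" and iso: "h \<in> iso W Q"
    using countable_group_iso_nat_monoid[OF group_W countable_finite[OF finite_W]] by blast
  then interpret h: group_hom W Q h
    using group_W by (simp add: group_hom_def group_hom_axioms_def iso_def)
  have inj: "inj_on h (carrier W)" and surj: "h ` carrier W = carrier Q"
    using iso by (auto simp: iso_def bij_betw_def)
  have "finite (carrier Q)"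
    using finite_imageI[OF finite_W, of h] surj by simp
  moreover have "h gen_shift \<in> carrier Q" "h gen_delta \<in> carrier Q"
    using gens_in_W h.hom_closed by blast+
  moreover have "generate Q {h gen_shift, h gen_delta} = carrier Q"
    using h.generate_img[of "{gen_shift, gen_delta}"] gens_in_W generate_W surj by simp
  moreover have "metabelian Q"
    using iso_metabelian[OF group_W \<open>group Q\<close> iso metabelian_W] .
  moreover have "\<forall>g\<in>carrier Q. g [^]\<^bsub>Q\<^esub> n = \<one>\<^bsub>Q\<^esub>"
    using h.surj_hom_pow_eq_one[OF surj] pow_n_W by blast
  moreover have "group.ord Q (h gen_shift) = n"
    using h.ord_hom_inj[OF inj gens_in_W(1)] ord_W_gen_shift by simp
  moreover have "group.ord Q (commutator Q (h gen_shift) (h gen_delta)) = n"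
    using h.ord_hom_inj[OF inj commutator_gens_in_W] ord_W_commutator_gens
    by (simp flip: h.hom_commutator[OF gens_in_W])
  ultimately show ?thesis
    using \<open>group Q\<close> by blast
qed

end
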